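(* Let $f:\mathbb{R}^n\to\mathbb{R}$ be a polynomial of degree at most $4$ that can be written as \[ f(x)=g(x)^T G\, g(x)+c^T h(x), \] where $g:\mathbb{R}^n\to\mathbb{R}^p$ and $h:\mathbb{R}^n\to\mathbb{R}^r$ are vector-valued polynomials each of whose components is a linear or quadratic polynomial, $G\in\mathbb{R}^{p\times p}$ is positive definite, and $c\in\mathbb{R}^r$. Let $\lambda$ be the minimum eigenvalue of $G$. Assume: (i) there exist $L_1,R>0$ such that $\|h(x)\|/\|g(x)\|\le R$ whenever $\|x\|>L_1$; (ii)(a) if $f(0)\neq0$, $L>L_1$ is such that $\|g(x)\|>\max\{|f(0)|,(1+\|c\|R)/\lambda\}$ whenever $\|x\|>L$; (ii)(b) if $f(0)=0$, $L>L_1$ is such that $\|g(x)\|>\|c\|R/\lambda$ whenever $\|x\|>L$. Then every global minimizer $x^*$ of $f$ satisfies $\|x^*\|\le L$, i.e., $\operatorname{argmin} f\subset B[0,L]=\{x:\|x\|\le L\}$.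
   Context: $\|\cdot\|$ denotes the Euclidean norm. *)

theory Defs
  imports "HOL-Analysis.Analysis"
begin

definition poly_fun_deg_le :: "nat \<Rightarrow> (real^'n \<Rightarrow> real) \<Rightarrow> bool" where
  "poly_fun_deg_le d f \<longleftrightarrow>
     (\<exists>A coef. finite A \<and> (\<forall>\<alpha>\<in>A. (\<Sum>i\<in>UNIV. \<alpha> i) \<le> d) \<and>
        (\<forall>x. f x = (\<Sum>\<alpha>\<in>A. coef \<alpha> * (\<Prod>i\<in>UNIV. (x $ i) ^ (\<alpha> i)))))"

definition lin_or_quad :: "(real^'n \<Rightarrow> real) \<Rightarrow> bool" where
  "lin_or_quad f \<longleftrightarrow> poly_fun_deg_le 2 f \<and> \<not> poly_fun_deg_le 0 f"

definition pos_def :: "real^'p^'p \<Rightarrow> bool" where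
  "pos_def G \<longleftrightarrow> transpose G = G \<and> (\<forall>v. v \<noteq> 0 \<longrightarrow> v \<bullet> (G *v v) > 0)"

definition is_eigenvalue :: "real^'p^'p \<Rightarrow> real \<Rightarrow> bool" where
  "is_eigenvalue G \<mu> \<longleftrightarrow> (\<exists>v. v \<noteq> 0 \<and> G *v v = \<mu> *\<^sub>R v)"

definition min_eigenvalue :: "real^'p^'p \<Rightarrow> real \<Rightarrow> bool" where
  "min_eigenvalue G lam \<longleftrightarrow> is_eigenvalue G lam \<and> (\<forall>\<mu>. is_eigenvalue G \<mu> \<longrightarrow> lam \<le> \<mu>)"

end

theory Submission
  imports Defs
begin

(* Outside the ball, \<lambda> is a lower bound of the quadratic form of G on the unit sphere and
   Cauchy-Schwarz together with (i) gives |c\<bullet>h(x)| \<le> \<parallel>c\<parallel>R\<parallel>g(x)\<parallel>, so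
   f(x) \<ge> \<parallel>g(x)\<parallel> (\<lambda>\<parallel>g(x)\<parallel> - \<parallel>c\<parallel>R). Hypothesis (ii) makes this bound exceed f(0),
   so no point with \<parallel>x\<parallel> > L can be a global minimizer. *)

lemma symmetric_matrix_inner_swap:
  fixes G :: "real^'p^'p"
  assumes "transpose G = G"
  shows "x \<bullet> (G *v y) = (G *v x) \<bullet> y"
  by (metis assms dot_lmul_matrix transpose_matrix_vector)

lemma linear_coeff_eq_0_if_quadratic_nonneg:
  fixes b K :: real
  assumes nonneg: "\<And>t. 0 \<le> b * t + K * t\<^sup>2"
  shows "b = 0"
proof (rule ccontr)
  assume "b \<noteq> 0"
  define t where "t = \<bar>b\<bar> / (\<bar>K\<bar> + 1)"
  have t_pos: "t > 0" using \<open>b \<noteq> 0\<close> by (simp add: t_def)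
  have "\<bar>b\<bar> * t \<le> K * t\<^sup>2"
    using nonneg[of t] nonneg[of "- t"] by (cases "b \<ge> 0") auto
  then have "\<bar>b\<bar> \<le> K * t" using t_pos by (simp add: power2_eq_square)
  also have "\<dots> < \<bar>b\<bar>"
    using \<open>b \<noteq> 0\<close> by (simp add: t_def field_simps) (smt (verit) mult_less_cancel_right_pos)
  finally show False by simp
qed

lemma quadratic_form_ge_min_on_sphere:
  fixes G :: "real^'p^'p"
  obtains v where "norm v = 1" "\<And>y. (v \<bullet> (G *v v)) * (y \<bullet> y) \<le> y \<bullet> (G *v y)"
proof -
  define q where "q = (\<lambda>y::real^'p. y \<bullet> (G *v y))"
  have "sphere (0::real^'p) 1 \<noteq> {}" by simp
  moreover have "continuous_on (sphere 0 1) q"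
    unfolding q_def by (intro continuous_intros)
  ultimately obtain v where v: "v \<in> sphere 0 1" and v_min: "\<And>y. y \<in> sphere 0 1 \<Longrightarrow> q v \<le> q y"
    using continuous_attains_inf[OF compact_sphere] by blast
  have "q v * (y \<bullet> y) \<le> q y" for y
  proof (cases "y = 0")
    case True
    then show ?thesis by (simp add: q_def)
  next
    case False
    have "q v \<le> q ((1 / norm y) *\<^sub>R y)" using False by (intro v_min) simp
    also have "\<dots> = q y / (norm y)\<^sup>2"
      by (simp add: q_def matrix_vector_mult_scaleR power2_eq_square)
    finally show ?thesis using False by (simp add: field_simps power2_norm_eq_inner)
  qed
  with v show thesis by (intro that) (auto simp: q_def)
qed

lemma quadratic_form_min_imp_eigenvector:
  fixes G :: "real^'p^'p"
  assumes sym: "transpose G = G"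
    and ge: "\<And>y. m * (y \<bullet> y) \<le> y \<bullet> (G *v y)"
    and eq: "v \<bullet> (G *v v) = m * (v \<bullet> v)"
  shows "G *v v = m *\<^sub>R v"
proof -
  define u where "u = G *v v - m *\<^sub>R v"
  define K where "K = u \<bullet> (G *v u) - m * (u \<bullet> u)"
  have swap: "v \<bullet> (G *v u) = u \<bullet> (G *v v)"
    using symmetric_matrix_inner_swap[OF sym] by (simp add: inner_commute)
  have uu: "u \<bullet> (G *v v) - m * (u \<bullet> v) = u \<bullet> u"
    by (simp add: u_def inner_diff_right)
  have "0 \<le> 2 * (u \<bullet> u) * t + K * t\<^sup>2" for t
  proof -
    have "0 \<le> (v + t *\<^sub>R u) \<bullet> (G *v (v + t *\<^sub>R u)) - m * ((v + t *\<^sub>R u) \<bullet> (v + t *\<^sub>R u))"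
      using ge by simp
    also have "\<dots> = 2 * (u \<bullet> u) * t + K * t\<^sup>2"
      by (simp add: K_def eq swap uu[symmetric] matrix_vector_right_distrib
          matrix_vector_mult_scaleR inner_add_left inner_add_right inner_commute[of v u]
          power2_eq_square algebra_simps)
    finally show ?thesis .
  qed
  then have "2 * (u \<bullet> u) = 0" by (rule linear_coeff_eq_0_if_quadratic_nonneg)
  then show ?thesis by (simp add: u_def)
qed

lemma min_eigenvalue_le_quadratic_form:
  fixes G :: "real^'p^'p"
  assumes sym: "transpose G = G" and lam: "min_eigenvalue G lam"
  shows "lam * (y \<bullet> y) \<le> y \<bullet> (G *v y)"
proof -
  obtain v where v: "norm v = 1" and ge: "\<And>y. (v \<bullet> (G *v v)) * (y \<bullet> y) \<le> y \<bullet> (G *v y)"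
    using quadratic_form_ge_min_on_sphere[of G] by blast
  have "v \<bullet> v = 1" using v by (simp add: norm_eq_1)
  then have "G *v v = (v \<bullet> (G *v v)) *\<^sub>R v"
    by (intro quadratic_form_min_imp_eigenvector[OF sym ge]) simp
  with v have "is_eigenvalue G (v \<bullet> (G *v v))"
    unfolding is_eigenvalue_def by (metis norm_zero zero_neq_one)
  with lam have "lam \<le> v \<bullet> (G *v v)" by (simp add: min_eigenvalue_def)
  then have "lam * (y \<bullet> y) \<le> (v \<bullet> (G *v v)) * (y \<bullet> y)" by (simp add: mult_right_mono)
  then show ?thesis using ge[of y] by (rule order_trans)
qed

lemma pos_def_eigenvalue_pos:
  fixes G :: "real^'p^'p"
  assumes "pos_def G" and "is_eigenvalue G \<mu>"
  shows "\<mu> > 0"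
proof -
  obtain v where v: "v \<noteq> 0" "G *v v = \<mu> *\<^sub>R v"
    using assms(2) by (auto simp: is_eigenvalue_def)
  have "0 < v \<bullet> (G *v v)" using assms(1) v(1) by (simp add: pos_def_def)
  also have "\<dots> = \<mu> * (v \<bullet> v)" using v(2) by simp
  finally show ?thesis by (rule zero_less_mult_pos2) (use v(1) in simp)
qed

lemma quadratic_plus_linear_lower_bound:
  fixes G :: "real^'p^'p" and c w :: "real^'r"
  assumes sym: "transpose G = G" and lam: "min_eigenvalue G lam"
    and w_le: "norm w \<le> R * norm v"
  shows "norm v * (lam * norm v - norm c * R) \<le> v \<bullet> (G *v v) + c \<bullet> w"
proof -
  have "- (norm c * (R * norm v)) \<le> c \<bullet> w"
    using Cauchy_Schwarz_ineq2[of c w] mult_left_mono[OF w_le norm_ge_zero[of c]] by linarith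
  moreover have "lam * (norm v)\<^sup>2 \<le> v \<bullet> (G *v v)"
    using min_eigenvalue_le_quadratic_form[OF sym lam] by (simp add: power2_norm_eq_inner)
  ultimately show ?thesis by (simp add: power2_eq_square algebra_simps)
qed

theorem theorem3:
  fixes f :: "real^'n \<Rightarrow> real"
    and g :: "real^'n \<Rightarrow> real^'p"
    and h :: "real^'n \<Rightarrow> real^'r"
    and G :: "real^'p^'p"
    and c :: "real^'r"
    and lam L1 R L :: real
  assumes f_poly: "poly_fun_deg_le 4 f"
    and f_def: "\<And>x. f x = g x \<bullet> (G *v g x) + c \<bullet> h x"
    and g_poly: "\<And>i. lin_or_quad (\<lambda>x. g x $ i)"
    and h_poly: "\<And>i. lin_or_quad (\<lambda>x. h x $ i)"
    and G_pd: "pos_def G"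
    and lam: "min_eigenvalue G lam"
    and L1_pos: "L1 > 0" and R_pos: "R > 0"
    and hyp_i: "\<And>x. norm x > L1 \<Longrightarrow> norm (h x) / norm (g x) \<le> R"
    and L_gt: "L > L1"
    and hyp_iia: "f 0 \<noteq> 0 \<Longrightarrow>
        (\<forall>x. norm x > L \<longrightarrow> norm (g x) > max \<bar>f 0\<bar> ((1 + norm c * R) / lam))"
    and hyp_iib: "f 0 = 0 \<Longrightarrow> (\<forall>x. norm x > L \<longrightarrow> norm (g x) > norm c * R / lam)"
  shows "{x. \<forall>y. f x \<le> f y} \<subseteq> cball 0 L"
proof (rule subsetI, rule ccontr)
  fix x assume "x \<in> {x. \<forall>y. f x \<le> f y}" and "x \<notin> cball 0 L"
  then have min: "f x \<le> f 0" and x_far: "norm x > L" by auto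
  have sym: "transpose G = G" using G_pd by (simp add: pos_def_def)
  have lam_pos: "lam > 0"
    using lam G_pd pos_def_eigenvalue_pos by (auto simp: min_eigenvalue_def)
  define a where "a = norm (g x)"
  have a_big: "a > norm c * R / lam"
    and a_big_f0: "f 0 \<noteq> 0 \<Longrightarrow> a > \<bar>f 0\<bar> \<and> lam * a - norm c * R > 1"
    using hyp_iia hyp_iib x_far lam_pos by (fastforce simp: a_def field_simps)+
  have "norm c * R / lam \<ge> 0" using lam_pos R_pos by simp
  with a_big have a_pos: "a > 0" by linarith
  have "norm (h x) \<le> R * a"
    using hyp_i[of x] x_far L_gt a_pos by (simp add: a_def divide_le_eq)
  then have f_ge: "a * (lam * a - norm c * R) \<le> f x"
    unfolding f_def a_def by (rule quadratic_plus_linear_lower_bound[OF sym lam])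
  have "f x > f 0"
  proof (cases "f 0 = 0")
    case True
    have "lam * a - norm c * R > 0" using a_big lam_pos by (simp add: field_simps)
    with a_pos have "a * (lam * a - norm c * R) > 0" by simp
    with True f_ge show ?thesis by linarith
  next
    case False
    with a_big_f0 have "a > \<bar>f 0\<bar>" and "lam * a - norm c * R > 1" by auto
    then have "a < a * (lam * a - norm c * R)"
      using mult_strict_left_mono[of 1 _ a] a_pos by simp
    with f_ge \<open>a > \<bar>f 0\<bar>\<close> show ?thesis by linarith
  qed
  with min show False by simp
qed

end
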